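(* Let $m\ge5$ be an odd integer and $n=\frac{3^m+1}{4}$. Then $\delta_1=\frac{3^{m-1}-1}{8}$ and $\delta_2=\frac{3^{m-1}-1}{8}-2$ are the largest and the second largest $3$-cyclotomic coset leaders modulo $n$, respectively, and $|C_{\delta_1}|=|C_{\delta_2}|=2m$.
   Context: For $0\le s\le n-1$, $C_s=\{s3^i\bmod n:i\ge0\}$ is the $3$-cyclotomic coset of $s$ modulo $n$; its least element is its coset leader. *)

theory Defs
  imports Main
begin

definition cyc_coset :: "nat \<Rightarrow> nat \<Rightarrow> nat \<Rightarrow> nat set" where
  "cyc_coset q n s = {s * q ^ i mod n | i. True}"

definition is_coset_leader :: "nat \<Rightarrow> nat \<Rightarrow> nat \<Rightarrow> bool" where
  "is_coset_leader q n d \<longleftrightarrow> d < n \<and> d = Min (cyc_coset q n d)"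

end

theory Submission
  imports Defs "HOL-Number_Theory.Cong"
begin

text \<open>
  Since \<open>4n = 3^m + 1\<close>, we have \<open>3^m \<equiv> -1 (mod n)\<close>: every coset has at most \<open>2m\<close>
  elements and is closed under \<open>c \<mapsto> n - c\<close>. A coset leader \<open>d\<close> with \<open>6d > n\<close> would
  therefore have its whole orbit inside the middle interval \<open>(n/6, 5n/6)\<close>. For the centred
  values \<open>D\<^sub>i = n - 2 (d 3^i mod n)\<close> this means \<open>|D\<^sub>i| < 2n/3\<close> and
  \<open>D\<^sub>i\<^sub>+\<^sub>1 = 3 D\<^sub>i + 2n j\<close> with \<open>j \<in> {-1, 0, 1}\<close>, where \<open>j \<noteq> 0\<close> exactly when the sign
  changes. Summing up, \<open>D\<^sub>m = 3^m D\<^sub>0 + 2n T\<close> with \<open>T\<close> even iff \<open>D\<^sub>m\<close> and \<open>D\<^sub>0\<close> have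
  the same sign; but \<open>D\<^sub>m = -D\<^sub>0\<close>, and \<open>4n | 3^m + 1\<close> then forces \<open>T\<close> to be even.
  Hence every leader is at most \<open>(n - 1)/6 = \<delta>\<^sub>1\<close>. The coset of \<open>\<delta>\<^sub>1 - 1 = 9 (3^(m-3) - 1)/8\<close>
  contains \<open>(3^(m-3) - 1)/8\<close>, so it is no leader. Finally, for \<open>\<delta> = \<delta>\<^sub>1, \<delta>\<^sub>2\<close> the
  residues \<open>\<delta> 3^k mod n\<close>, \<open>0 < k < m\<close>, are computed explicitly (mostly of the form
  \<open>(n - a 3^j)/2\<close>) and lie strictly between \<open>\<delta>\<close> and \<open>n - \<delta>\<close>; so \<open>\<delta>\<close> is the minimum of
  its coset and the \<open>2m\<close> residues are distinct.
\<close>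

lemma mod_eq_diff_mod_if_dvd_add:
  fixes a b n :: nat
  assumes "n dvd a + b"
  shows "a mod n = (n - b mod n) mod n"
proof (cases "b mod n = 0")
  case True
  then have "n dvd b" by (simp add: mod_0_imp_dvd)
  then have "n dvd a" using assms by (simp add: dvd_add_left_iff)
  then show ?thesis using True by simp
next
  case False
  then have n: "0 < n" using assms by (cases "n = 0") auto
  have "n dvd a mod n + b mod n" using assms by (simp add: mod_add_eq dvd_eq_mod_eq_0)
  then obtain k where k: "a mod n + b mod n = n * k" by blast
  have "n * k < n * 2" using k mod_less_divisor[OF n, of a] mod_less_divisor[OF n, of b] by linarith
  then have "k < 2" by simp
  moreover have "k \<noteq> 0" using k False by (metis add_is_0 mult_0_right)
  ultimately have "k = 1" by simp
  then show ?thesis using k False by simp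
qed

lemma mult_power_add_mod:
  fixes q n x :: nat
  shows "x * q ^ (a + t) mod n = (x * q ^ a mod n) * q ^ t mod n"
  by (simp add: power_add mod_mult_left_eq mult.assoc)

lemma mult_power_add_mod_if_dvd:
  fixes q n x :: nat
  assumes "n dvd q ^ m + 1"
  shows "x * q ^ (k + m) mod n = (n - x * q ^ k mod n) mod n"
proof (rule mod_eq_diff_mod_if_dvd_add)
  have "x * q ^ (k + m) + x * q ^ k = x * q ^ k * (q ^ m + 1)"
    by (simp add: power_add algebra_simps)
  then show "n dvd x * q ^ (k + m) + x * q ^ k" using assms by (metis dvd_mult)
qed

lemma power_double_cong_one_if_dvd:
  fixes q n :: nat
  assumes "n dvd q ^ m + 1"
  shows "[q ^ (2 * m) = 1] (mod n)"
proof -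
  have "[int (q ^ m + 1) = int 0] (mod int n)"
    using assms by (simp only: cong_int_iff cong_0_iff)
  then have "[int q ^ m + 1 = 0] (mod int n)" by (simp add: add.commute)
  then have "[int q ^ m = - 1] (mod int n)"
    using cong_add_rcancel[of "int q ^ m" 1 "- 1" "int n"] by simp
  then have "[(int q ^ m) ^ 2 = (- 1) ^ 2] (mod int n)" by (rule cong_pow)
  then have "[int (q ^ (2 * m)) = int 1] (mod int n)" by (simp add: power_mult_distrib power_mult mult.commute)
  then show ?thesis by (simp only: cong_int_iff)
qed

lemma mult_power_mod_period:
  fixes q n x :: nat
  assumes "[q ^ p = 1] (mod n)"
  shows "x * q ^ i mod n = x * q ^ (i mod p) mod n"
proof -
  have "[x * q ^ (i mod p) * (q ^ p) ^ (i div p) = x * q ^ (i mod p) * 1 ^ (i div p)] (mod n)"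
    using assms by (intro cong_mult cong_pow cong_refl)
  moreover have "q ^ i = q ^ (i mod p) * (q ^ p) ^ (i div p)"
    by (metis mod_div_mult_eq power_add power_mult mult.commute)
  ultimately show ?thesis by (simp add: cong_def mult.assoc)
qed

lemma mult_power_mod_mem_cyc_coset: "x * q ^ i mod n \<in> cyc_coset q n x"
  by (auto simp: cyc_coset_def)

lemma cyc_coset_eq_image:
  assumes "[q ^ p = 1] (mod n)" and "0 < p"
  shows "cyc_coset q n x = (\<lambda>i. x * q ^ i mod n) ` {..<p}"
proof
  show "cyc_coset q n x \<subseteq> (\<lambda>i. x * q ^ i mod n) ` {..<p}"
  proof
    fix y assume "y \<in> cyc_coset q n x"
    then obtain i where "y = x * q ^ (i mod p) mod n"
      using mult_power_mod_period[OF assms(1)] by (auto simp: cyc_coset_def)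
    then show "y \<in> (\<lambda>i. x * q ^ i mod n) ` {..<p}" using assms(2) by simp
  qed
  show "(\<lambda>i. x * q ^ i mod n) ` {..<p} \<subseteq> cyc_coset q n x"
    using mult_power_mod_mem_cyc_coset by blast
qed

lemma card_cyc_coset:
  assumes period: "[q ^ p = 1] (mod n)" and "0 < p"
    and primitive: "\<And>i. 0 < i \<Longrightarrow> i < p \<Longrightarrow> x * q ^ i mod n \<noteq> x mod n"
  shows "card (cyc_coset q n x) = p"
proof -
  define c where "c i = x * q ^ i mod n" for i
  have shift: "c (a + t) = c (b + t)" if "c a = c b" for a b t
    using that unfolding c_def by (simp only: mult_power_add_mod)
  have "c a \<noteq> c b" if "a < b" "b < p" for a b
  proof
    assume "c a = c b"
    then have "c (a + (p - b)) = c (b + (p - b))" by (rule shift)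
    then have "c (a + (p - b)) = c p" using that by simp
    also have "c p = x mod n" unfolding c_def using mult_power_mod_period[OF period, of x p] by simp
    finally have "c (a + (p - b)) = x mod n" .
    moreover have "0 < a + (p - b)" "a + (p - b) < p" using that by auto
    ultimately show False using primitive[of "a + (p - b)"] unfolding c_def by simp
  qed
  then have "inj_on c {..<p}"
    by (intro inj_onI) (metis lessThan_iff linorder_neqE_nat)
  then have "card (c ` {..<p}) = p" by (simp add: card_image)
  moreover have "cyc_coset q n x = c ` {..<p}"
    unfolding c_def by (rule cyc_coset_eq_image[OF assms(1,2)])
  ultimately show ?thesis by simp
qed

lemma coset_leader_le:
  assumes "is_coset_leader q n d" and "y \<in> cyc_coset q n d"
  shows "d \<le> y"
proof -
  have "cyc_coset q n d \<subseteq> {..<n}"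
    using assms(1) by (auto simp: is_coset_leader_def cyc_coset_def)
  then have "Min (cyc_coset q n d) \<le> y" using assms(2) by (meson Min_le finite_lessThan finite_subset)
  then show ?thesis using assms(1) unfolding is_coset_leader_def by linarith
qed

lemma mod_mem_cyc_coset_mult_power:
  assumes "[q ^ p = 1] (mod n)" and "0 < p"
  shows "y mod n \<in> cyc_coset q n (y * q ^ j)"
proof -
  have "j + (p - 1) * j = p * j" using assms(2) by (cases p) auto
  then have eq: "y * q ^ j * q ^ ((p - 1) * j) = y * (q ^ p) ^ j"
    by (metis mult.assoc power_add power_mult)
  have "[y * (q ^ p) ^ j = y * 1 ^ j] (mod n)"
    using assms(1) by (intro cong_mult cong_pow cong_refl)
  then have "y * q ^ j * q ^ ((p - 1) * j) mod n = y mod n" unfolding eq cong_def by simp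
  then show ?thesis using mult_power_mod_mem_cyc_coset[of "y * q ^ j" q "(p - 1) * j" n] by simp
qed

text \<open>Only the first half of the orbit needs checking: the residues at \<open>k + m\<close> are \<open>n\<close> minus
  those at \<open>k\<close>.\<close>

lemma coset_leader_if_orbit_between:
  fixes q n x m :: nat
  assumes neg: "n dvd q ^ m + 1" and "0 < m" and "0 < x" and "2 * x < n"
    and between: "\<And>k. 0 < k \<Longrightarrow> k < m \<Longrightarrow> x < x * q ^ k mod n \<and> x * q ^ k mod n < n - x"
  shows "is_coset_leader q n x \<and> card (cyc_coset q n x) = 2 * m"
proof -
  define c where "c k = x * q ^ k mod n" for k
  have c0: "c 0 = x" using assms(4) by (simp add: c_def)
  have below_half: "x \<le> c k \<and> c k < n - x" if "k < m" for k
    using between[of k] c0 that assms(4) by (cases "k = 0") (auto simp: c_def)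
  have above: "x < c k" if "0 < k" "k < 2 * m" for k
  proof (cases "k < m")
    case True
    then show ?thesis using between that by (simp add: c_def)
  next
    case False
    define j where "j = k - m"
    have j: "k = j + m" "j < m" using False that(2) by (simp_all add: j_def)
    have "c k = (n - c j) mod n"
      unfolding c_def j(1) by (rule mult_power_add_mod_if_dvd[OF neg])
    also have "\<dots> = n - c j" using below_half[OF j(2)] assms(3) by (intro mod_less) linarith
    finally show ?thesis using below_half[OF j(2)] j by (cases "j = 0") (auto simp: c0)
  qed
  have period: "[q ^ (2 * m) = 1] (mod n)" using neg by (rule power_double_cong_one_if_dvd)
  have coset: "cyc_coset q n x = c ` {..<2 * m}"
    unfolding c_def using period assms(2) by (simp add: cyc_coset_eq_image)
  have "Min (cyc_coset q n x) = x"
  proof (rule Min_eqI)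
    show "finite (cyc_coset q n x)" using coset by simp
    have "x \<le> c k" if "k < 2 * m" for k
      using above[of k] c0 that by (cases "k = 0") auto
    then show "y \<in> cyc_coset q n x \<Longrightarrow> x \<le> y" for y
      using coset by auto
    show "x \<in> cyc_coset q n x" using coset c0 assms(2) by force
  qed
  then have "is_coset_leader q n x" using assms(4) by (simp add: is_coset_leader_def)
  moreover have "card (cyc_coset q n x) = 2 * m"
  proof (rule card_cyc_coset[OF period])
    show "0 < 2 * m" using assms(2) by simp
    show "x * q ^ i mod n \<noteq> x mod n" if "0 < i" "i < 2 * m" for i
      using above[OF that] c0 by (simp add: c_def)
  qed
  ultimately show ?thesis by simp
qed

lemma centered_triple_step:
  fixes d d' N :: int
  assumes "[d' = 3 * d] (mod N)" and "3 * \<bar>d\<bar> < N" and "3 * \<bar>d'\<bar> < N" and "d \<noteq> 0"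
  obtains j where "j \<in> {-1, 0, 1}" and "d' = 3 * d + N * j" and "d' \<noteq> 0"
    and "(0 < d') = (0 < d) \<longleftrightarrow> j = 0"
proof -
  have bounds: "- N < 3 * d" "3 * d < N" "- N < 3 * d'" "3 * d' < N"
    using assms(2,3) abs_ge_self[of d] abs_ge_minus_self[of d] abs_ge_self[of d']
      abs_ge_minus_self[of d'] by linarith+
  obtain j where j: "d' = 3 * d + N * j"
    using assms(1) by (metis cong_iff_dvd_diff dvd_def diff_eq_eq add.commute)
  have N: "0 < N" using bounds by linarith
  have "N * j < N * 2" and "N * (- 2) < N * j" using j bounds by linarith+
  then have "j < 2" and "- 2 < j" using mult_less_cancel_left_pos[OF N] by blast+
  then consider "j = -1" | "j = 0" | "j = 1" by linarith
  then have "j \<in> {-1, 0, 1} \<and> d' \<noteq> 0 \<and> ((0 < d') = (0 < d) \<longleftrightarrow> j = 0)"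
    by cases (use j bounds assms(4) in \<open>simp; linarith\<close>)+
  then show thesis using that j by blast
qed

lemma centered_triple_orbit:
  fixes D :: "nat \<Rightarrow> int" and N :: int
  assumes step: "\<And>i. [D (Suc i) = 3 * D i] (mod N)"
    and small: "\<And>i. 3 * \<bar>D i\<bar> < N" and "D 0 \<noteq> 0"
  shows "D k \<noteq> 0 \<and> (\<exists>T. D k = 3 ^ k * D 0 + N * T \<and> ((0 < D k) = (0 < D 0) \<longleftrightarrow> even T))"
proof (induction k)
  case 0
  show ?case using assms(3) by (intro conjI exI[of _ 0]) simp_all
next
  case (Suc k)
  then obtain T where T: "D k = 3 ^ k * D 0 + N * T" "(0 < D k) = (0 < D 0) \<longleftrightarrow> even T"
    by blast
  obtain j where j: "j \<in> {-1, 0, 1}" "D (Suc k) = 3 * D k + N * j" "D (Suc k) \<noteq> 0"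
    "(0 < D (Suc k)) = (0 < D k) \<longleftrightarrow> j = 0"
    using centered_triple_step[OF step small small] Suc.IH by blast
  have "D (Suc k) = 3 ^ Suc k * D 0 + N * (3 * T + j)"
    using T(1) j(2) by (simp add: algebra_simps)
  moreover have "(0 < D (Suc k)) = (0 < D 0) \<longleftrightarrow> even (3 * T + j)"
    using T(2) j(1,4) by auto
  ultimately show ?case using j(3) by blast
qed

lemma centered_triple_orbit_not_negated:
  fixes D :: "nat \<Rightarrow> int" and N :: int
  assumes step: "\<And>i. [D (Suc i) = 3 * D i] (mod N)"
    and small: "\<And>i. 3 * \<bar>D i\<bar> < N" and nonzero: "D 0 \<noteq> 0"
    and "2 * N dvd 3 ^ m + 1"
  shows "D m \<noteq> - D 0"
proof
  assume negated: "D m = - D 0"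
  obtain T where T: "D m = 3 ^ m * D 0 + N * T" "(0 < D m) = (0 < D 0) \<longleftrightarrow> even T"
    using centered_triple_orbit[OF step small nonzero] by blast
  obtain s where s: "3 ^ m + 1 = 2 * N * s" using assms(4) by blast
  have "N * T = - ((3 ^ m + 1) * D 0)"
    using T(1) negated by (simp add: algebra_simps)
  also have "\<dots> = N * (- 2 * s * D 0)"
    unfolding s by (simp add: algebra_simps)
  finally have "N * T = N * (- 2 * s * D 0)" .
  moreover have "N \<noteq> 0" using small[of 0] abs_ge_zero[of "D 0"] by linarith
  ultimately have "T = - 2 * s * D 0" using mult_left_cancel by blast
  then show False using T(2) negated nonzero by auto
qed

lemma triple_orbit_leaves_middle:
  fixes n m x :: nat
  assumes "odd n" and "4 * n dvd 3 ^ m + 1"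
  shows "\<exists>i. \<not> (n < 6 * (x * 3 ^ i mod n) \<and> 6 * (x * 3 ^ i mod n) < 5 * n)"
proof (rule ccontr)
  assume inside: "\<not> ?thesis"
  define c where "c i = x * 3 ^ i mod n" for i
  have middle: "n < 6 * c i" "6 * c i < 5 * n" for i
    using inside by (auto simp: c_def)
  define D where "D i = int n - 2 * int (c i)" for i
  have "[D (Suc i) = 3 * D i] (mod (2 * int n))" for i
  proof -
    have "c (Suc i) = 3 * c i mod n"
      using mult_power_add_mod[where a = i and t = 1] by (simp add: c_def mult.commute)
    then have "3 * c i = n * (3 * c i div n) + c (Suc i)" by simp
    then have "3 * int (c i) = int n * int (3 * c i div n) + int (c (Suc i))"
      by (metis of_nat_add of_nat_mult of_nat_numeral)
    then have "D (Suc i) - 3 * D i = 2 * int n * (int (3 * c i div n) - 1)"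
      unfolding D_def by (simp add: ring_distribs)
    then show ?thesis by (simp add: cong_iff_dvd_diff)
  qed
  moreover have "3 * \<bar>D i\<bar> < 2 * int n" for i
    using middle[of i] unfolding D_def by (simp add: abs_if; linarith)
  moreover have "D 0 \<noteq> 0"
  proof
    assume "D 0 = 0"
    then have "int n = int (2 * c 0)" by (simp add: D_def)
    then have "n = 2 * c 0" by (simp only: of_nat_eq_iff)
    then show False using assms(1) by simp
  qed
  moreover have "2 * (2 * int n) dvd 3 ^ m + 1"
  proof -
    have "int (4 * n) dvd int (3 ^ m + 1)" using assms(2) by (simp only: int_dvd_int_iff)
    then show ?thesis by (simp add: add.commute)
  qed
  ultimately have "D m \<noteq> - D 0" by (rule centered_triple_orbit_not_negated)
  moreover have "c m = n - c 0"
  proof -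
    have "0 < c 0" "c 0 < n" using middle[of 0] by linarith+
    moreover have "c m = (n - c 0) mod n"
      using mult_power_add_mod_if_dvd[OF dvd_mult_right[OF assms(2)], of x 0] by (simp add: c_def)
    ultimately show ?thesis by simp
  qed
  ultimately show False using middle[of 0] by (simp add: D_def of_nat_diff)
qed

lemma coset_leader_lt_sixth:
  fixes n m d :: nat
  assumes "odd n" and "4 * n dvd 3 ^ m + 1" and leader: "is_coset_leader 3 n d"
  shows "6 * d < n"
proof (rule ccontr)
  assume "\<not> 6 * d < n"
  then have large: "n < 6 * d" using assms(1) by presburger
  obtain i where i: "\<not> (n < 6 * (d * 3 ^ i mod n) \<and> 6 * (d * 3 ^ i mod n) < 5 * n)"
    using triple_orbit_leaves_middle[OF assms(1,2)] by blast
  define c where "c = d * 3 ^ i mod n"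
  have "c \<in> cyc_coset 3 n d" unfolding c_def by (rule mult_power_mod_mem_cyc_coset)
  then have "d \<le> c" by (rule coset_leader_le[OF leader])
  have "d * 3 ^ (i + m) mod n = (n - c) mod n"
    using mult_power_add_mod_if_dvd[OF dvd_mult_right[OF assms(2)]] by (simp add: c_def)
  also have "\<dots> = n - c"
    using \<open>d \<le> c\<close> large leader unfolding is_coset_leader_def by (intro mod_less) linarith
  finally have "n - c \<in> cyc_coset 3 n d" using mult_power_mod_mem_cyc_coset[of d 3 "i + m" n] by simp
  then have "d \<le> n - c" by (rule coset_leader_le[OF leader])
  then show False using i large \<open>d \<le> c\<close> unfolding c_def[symmetric] by linarith
qed

lemma mult_power_three_mod_half_gap:
  fixes n x a :: nat
  assumes "2 * (x mod n) + a = n" and "3 ^ k * a \<le> n"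
  shows "2 * (x * 3 ^ k mod n) + 3 ^ k * a = n"
  using assms(2)
proof (induction k)
  case 0
  then show ?case using assms(1) by simp
next
  case (Suc k)
  define c where "c = x * 3 ^ k mod n"
  have gap: "2 * c + 3 ^ k * a = n" using Suc by (simp add: c_def)
  have "x * 3 ^ Suc k mod n = 3 * c mod n"
    using mult_power_add_mod[where a = k and t = 1] by (simp add: c_def mult.commute)
  also have "\<dots> = 3 * c - n"
  proof (cases "n = 0")
    case False
    have "n \<le> 3 * c" "3 * c - n < n" using gap Suc.prems False by simp_all
    then show ?thesis by (simp add: le_mod_geq)
  qed (use gap in simp)
  finally show ?case using gap Suc.prems by simp
qed

lemma power_three_mod_eight: "(3::nat) ^ k mod 8 = (if even k then 1 else 3)"
proof (induction k)
  case (Suc k)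
  have "(3::nat) ^ Suc k mod 8 = 3 * (3 ^ k mod 8) mod 8" by (simp add: mod_mult_right_eq)
  then show ?case using Suc by simp
qed simp

lemma power_three_odd_exp_div:
  fixes m :: nat
  assumes "odd m"
  shows "(3::nat) ^ m + 1 = 4 * ((3 ^ m + 1) div 4)"
    and "8 * (((3::nat) ^ (m - 1) - 1) div 8) + 1 = 3 ^ (m - 1)"
proof -
  have "3 ^ m mod 8 = (3::nat)" and "3 ^ (m - 1) mod 8 = (1::nat)"
    using power_three_mod_eight[of m] power_three_mod_eight[of "m - 1"] assms by simp_all
  then show "(3::nat) ^ m + 1 = 4 * ((3 ^ m + 1) div 4)"
    and "8 * (((3::nat) ^ (m - 1) - 1) div 8) + 1 = 3 ^ (m - 1)" by presburger+
qed

lemma coset_leader_delta1: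
  fixes m n \<delta> :: nat
  assumes n: "3 ^ m + 1 = 4 * n" and \<delta>: "8 * \<delta> + 1 = 3 ^ (m - 1)" and "1 < m"
  shows "is_coset_leader 3 n \<delta> \<and> card (cyc_coset 3 n \<delta>) = 2 * m"
proof -
  define P where "P = (3::nat) ^ (m - 2)"
  have m: "m = (m - 2) + 2" using assms(3) by simp
  have P: "3 * P = 8 * \<delta> + 1" using \<delta> unfolding P_def by (subst (asm) m) simp
  have n6: "n = 6 * \<delta> + 1" using n P unfolding P_def by (subst (asm) m) simp
  have start: "2 * (\<delta> * 3 mod n) + 1 = n" using n6 by simp
  show ?thesis
  proof (rule coset_leader_if_orbit_between)
    show "n dvd 3 ^ m + 1" using n by simp
    have "1 \<le> P" by (simp add: P_def)
    then show "0 < m" "0 < \<delta>" "2 * \<delta> < n" using assms(3) P n6 by linarith+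
    fix k assume k: "0 < k" "k < m"
    define j where "j = k - 1"
    have j: "\<delta> * 3 * 3 ^ j = \<delta> * 3 ^ k" "j \<le> m - 2"
      using k by (simp_all add: j_def mult.assoc flip: power_Suc)
    have "3 ^ j \<le> P" unfolding P_def using j(2) by (intro power_increasing) auto
    then have "3 ^ j * 1 \<le> n" using P n6 by linarith
    from mult_power_three_mod_half_gap[OF start this]
    have "2 * (\<delta> * 3 ^ k mod n) + 3 ^ j = n" unfolding j(1) by simp
    then show "\<delta> < \<delta> * 3 ^ k mod n \<and> \<delta> * 3 ^ k mod n < n - \<delta>"
      using \<open>3 ^ j \<le> P\<close> P n6 by linarith
  qed
qed

lemma coset_leader_delta2:
  fixes m n \<delta> :: nat
  assumes n: "3 ^ m + 1 = 4 * n" and \<delta>: "8 * \<delta> + 17 = 3 ^ (m - 1)" and "4 < m"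
  shows "is_coset_leader 3 n \<delta> \<and> card (cyc_coset 3 n \<delta>) = 2 * m"
proof -
  define R where "R = (3::nat) ^ (m - 4)"
  have m: "m = (m - 4) + 4" using assms(3) by simp
  have R: "27 * R = 8 * \<delta> + 17" using \<delta> unfolding R_def by (subst (asm) m) (simp add: power_add)
  have n13: "n = 6 * \<delta> + 13" using n R unfolding R_def by (subst (asm) m) (simp add: power_add)
  have "1 \<le> R" by (simp add: R_def)
  have start: "2 * (\<delta> * 3 mod n) + 13 = n" using n13 by simp
  \<comment> \<open>the half-gap pattern \<open>(n - 13 \<cdot> 3^j)/2\<close> lasts up to \<open>k = m - 3\<close>; the last two
    residues are \<open>3C\<close> and \<open>9C - n\<close>\<close>
  define C where "C = \<delta> * 3 ^ (m - 3) mod n"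
  have "3 ^ (m - 4) * 13 \<le> n" using R n13 by (simp add: R_def)
  from mult_power_three_mod_half_gap[OF start this]
  have "2 * (\<delta> * 3 ^ Suc (m - 4) mod n) + 13 * R = n" by (simp add: R_def mult.assoc)
  moreover have "Suc (m - 4) = m - 3" using assms(3) by simp
  ultimately have C: "2 * C + 13 * R = n" by (simp add: C_def)
  have tail: "\<delta> * 3 ^ (m - 3 + t) mod n = C * 3 ^ t mod n" for t
    unfolding C_def by (rule mult_power_add_mod)
  show ?thesis
  proof (rule coset_leader_if_orbit_between)
    show "n dvd 3 ^ m + 1" using n by simp
    show "0 < m" "0 < \<delta>" "2 * \<delta> < n" using assms(3) R n13 \<open>1 \<le> R\<close> by linarith+
    fix k assume k: "0 < k" "k < m"
    then consider "k \<le> m - 3" | "k = m - 3 + 1" | "k = m - 3 + 2" by linarith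
    then show "\<delta> < \<delta> * 3 ^ k mod n \<and> \<delta> * 3 ^ k mod n < n - \<delta>"
    proof cases
      case 1
      define j where "j = k - 1"
      have j: "\<delta> * 3 * 3 ^ j = \<delta> * 3 ^ k" "j \<le> m - 4"
        using k 1 by (simp_all add: j_def mult.assoc flip: power_Suc)
      have "3 ^ j \<le> R" unfolding R_def using j(2) by (intro power_increasing) auto
      then have "3 ^ j * 13 \<le> n" using R n13 by linarith
      from mult_power_three_mod_half_gap[OF start this]
      have "2 * (\<delta> * 3 ^ k mod n) + 3 ^ j * 13 = n" unfolding j(1) by simp
      then show ?thesis using \<open>3 ^ j \<le> R\<close> R n13 by linarith
    next
      case 2
      have "\<delta> * 3 ^ k mod n = 3 * C"
        using tail[of 1] C R n13 \<open>1 \<le> R\<close> unfolding 2 by simp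
      then show ?thesis using C R n13 \<open>1 \<le> R\<close> by linarith
    next
      case 3
      have "n \<le> 9 * C" "9 * C - n < n" using C R n13 \<open>1 \<le> R\<close> by linarith+
      then have "\<delta> * 3 ^ k mod n = 9 * C - n"
        using tail[of 2] unfolding 3 by (simp add: le_mod_geq)
      then show ?thesis using C R n13 \<open>1 \<le> R\<close> by linarith
    qed
  qed
qed

lemma not_coset_leader_delta1_pred:
  fixes m n \<delta> :: nat
  assumes n: "3 ^ m + 1 = 4 * n" and \<delta>: "8 * \<delta> + 1 = 3 ^ (m - 1)" and "3 < m"
  shows "\<not> is_coset_leader 3 n (\<delta> - 1)"
proof
  assume leader: "is_coset_leader 3 n (\<delta> - 1)"
  define P where "P = (3::nat) ^ (m - 3)"
  have m: "m = (m - 3) + 3" using assms(3) by simp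
  have P: "9 * P = 8 * \<delta> + 1" using \<delta> unfolding P_def by (subst (asm) m) (simp add: power_add)
  have n6: "n = 6 * \<delta> + 1" using n P unfolding P_def by (subst (asm) m) (simp add: power_add)
  have "3 ^ 1 \<le> P" unfolding P_def using assms(3) by (intro power_increasing) simp_all
  define e where "e = P div 8"
  have "P mod 8 = 1" using P by presburger
  then have "P = 8 * e + 1" unfolding e_def by presburger
  then have e: "\<delta> = 9 * e + 1" "0 < e" using P \<open>3 ^ 1 \<le> P\<close> by simp_all
  have "[3 ^ (2 * m) = 1] (mod n)" using n by (intro power_double_cong_one_if_dvd) simp
  moreover have "0 < 2 * m" using assms(3) by linarith
  ultimately have "e mod n \<in> cyc_coset 3 n (e * 3 ^ 2)" by (rule mod_mem_cyc_coset_mult_power)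
  moreover have "e < n" using e n6 by linarith
  ultimately have "e \<in> cyc_coset 3 n (\<delta> - 1)" using e(1) by (simp add: mult.commute)
  then have "\<delta> - 1 \<le> e" by (rule coset_leader_le[OF leader])
  then show False using e by simp
qed

theorem lemma18:
  fixes m n \<delta>1 \<delta>2 :: nat
  assumes "odd m" and "m \<ge> 5"
    and "n = (3 ^ m + 1) div 4"
    and "\<delta>1 = (3 ^ (m - 1) - 1) div 8"
    and "\<delta>2 = (3 ^ (m - 1) - 1) div 8 - 2"
  shows "is_coset_leader 3 n \<delta>1
       \<and> (\<forall>d. is_coset_leader 3 n d \<longrightarrow> d \<le> \<delta>1)
       \<and> is_coset_leader 3 n \<delta>2 \<and> \<delta>2 < \<delta>1
       \<and> (\<forall>d. is_coset_leader 3 n d \<and> d \<noteq> \<delta>1 \<longrightarrow> d \<le> \<delta>2)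
       \<and> card (cyc_coset 3 n \<delta>1) = 2 * m
       \<and> card (cyc_coset 3 n \<delta>2) = 2 * m"
proof -
  have n: "3 ^ m + 1 = 4 * n" and \<delta>1: "8 * \<delta>1 + 1 = 3 ^ (m - 1)"
    unfolding assms(3,4) using power_three_odd_exp_div[OF assms(1)] by simp_all
  have "3 ^ 4 \<le> (3::nat) ^ (m - 1)" using assms(2) by (intro power_increasing) simp_all
  moreover have "\<delta>2 = \<delta>1 - 2" using assms(4,5) by simp
  ultimately have \<delta>2: "\<delta>2 + 2 = \<delta>1" "8 * \<delta>2 + 17 = 3 ^ (m - 1)"
    using \<delta>1 by simp_all
  have "3 ^ m = 3 * (3::nat) ^ (m - 1)" using assms(2) by (simp flip: power_Suc)
  then have "n = 6 * \<delta>1 + 1" using n \<delta>1 by simp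
  then have largest: "d \<le> \<delta>1" if "is_coset_leader 3 n d" for d
    using coset_leader_lt_sixth[OF _ _ that, of m] n by simp
  have "\<not> is_coset_leader 3 n (\<delta>1 - 1)"
    using not_coset_leader_delta1_pred[OF n \<delta>1] assms(2) by simp
  then have "d \<le> \<delta>2" if "is_coset_leader 3 n d" "d \<noteq> \<delta>1" for d
    using largest[OF that(1)] that \<delta>2(1) by (cases "d = \<delta>1 - 1") auto
  then show ?thesis
    using coset_leader_delta1[OF n \<delta>1] coset_leader_delta2[OF n \<delta>2(2)] largest \<delta>2(1) assms(2)
    by auto
qed

end
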